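(* Let $X,Y$ be proper metric spaces, $p\in[1,\infty)$, $f:X\to Y$ a continuous coarse map, $E^p_X$ an $L^p$-$X$-module and $E^p_Y$ an $L^p$-$Y$-module. Then for every $\varepsilon>0$ there exist an isometric operator $V_f:E^p_X\to E^p_Y$ and a contractive operator $V_f^+:E^p_Y\to E^p_X$ with $V_f^+V_f=I$ such that $\mathrm{supp}(V_f)\subseteq\{(x,y)\in X\times Y:d(f(x),y)\le\varepsilon\}$ and $\mathrm{supp}(V_f^+)\subseteq\{(y,x)\in Y\times X:d(f(x),y)\le\varepsilon\}$.
   Context: An $L^p$-$X$-module is $E^p_X=\ell^p(Z_X)\otimes\ell^p=\ell^p(Z_X,\ell^p(\mathbb N))$ with $Z_X\subseteq X$ a countable dense subset and $C_0(X)$ (and bounded Borel functions) acting by pointwise multiplication on the $Z_X$ coordinate; $\chi_U$ denotes multiplication by the indicator of $U$. For a bounded $T:E^p_X\to E^p_Y$, $\mathrm{supp}(T)$ is the set of $(x,y)\in X\times Y$ such that $\chi_VT\chi_U\neq0$ for all open neighbourhoods $U$ of $x$ and $V$ of $y$ (and analogously for operators $E^p_Y\to E^p_X$, giving subsets of $Y\times X$). A Borel map $f$ is coarse if preimages of bounded sets are bounded and for each $R>0$ there is $R'$ with $d(f(x),f(y))\le R'$ whenever $d(x,y)\le R$. *)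

theory Defs
  imports "HOL-Analysis.Analysis"
begin

definition proper_space :: "'a::metric_space itself \<Rightarrow> bool" where
  "proper_space _ \<longleftrightarrow> (\<forall>(x::'a) r. compact (cball x r))"

definition coarse_map :: "('a::metric_space \<Rightarrow> 'b::metric_space) \<Rightarrow> bool" where
  "coarse_map f \<longleftrightarrow> f \<in> borel_measurable borel
     \<and> (\<forall>B. bounded B \<longrightarrow> bounded (f -` B))
     \<and> (\<forall>R>0. \<exists>R'. \<forall>x y. dist x y \<le> R \<longrightarrow> dist (f x) (f y) \<le> R')"

text \<open>The L^p-X-module E^p_X = l^p(Z, l^p(N)): its elements are functions
  Z x N -> C (extended by 0 outside Z) with p-summable modulus.\<close>
definition lp_module :: "real \<Rightarrow> 'a set \<Rightarrow> ('a \<Rightarrow> nat \<Rightarrow> complex) set" where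
  "lp_module p Z = {\<xi>. (\<forall>z n. z \<notin> Z \<longrightarrow> \<xi> z n = 0)
      \<and> (\<lambda>(z,n). norm (\<xi> z n) powr p) summable_on (Z \<times> UNIV)}"

definition lp_norm :: "real \<Rightarrow> 'a set \<Rightarrow> ('a \<Rightarrow> nat \<Rightarrow> complex) \<Rightarrow> real" where
  "lp_norm p Z \<xi> = (\<Sum>\<^sub>\<infinity>(z,n)\<in>Z \<times> UNIV. norm (\<xi> z n) powr p) powr (1 / p)"

definition chi :: "'a set \<Rightarrow> ('a \<Rightarrow> nat \<Rightarrow> complex) \<Rightarrow> ('a \<Rightarrow> nat \<Rightarrow> complex)" where
  "chi U \<xi> = (\<lambda>z n. if z \<in> U then \<xi> z n else 0)"

text \<open>Bounded linear operators E^p_X -> E^p_Y (only their values on E^p_X matter).\<close>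
definition bounded_lp_op :: "real \<Rightarrow> 'a set \<Rightarrow> 'b set
    \<Rightarrow> (('a \<Rightarrow> nat \<Rightarrow> complex) \<Rightarrow> ('b \<Rightarrow> nat \<Rightarrow> complex)) \<Rightarrow> bool" where
  "bounded_lp_op p ZX ZY T \<longleftrightarrow>
     (\<forall>\<xi>\<in>lp_module p ZX. T \<xi> \<in> lp_module p ZY)
   \<and> (\<forall>\<xi>\<in>lp_module p ZX. \<forall>\<eta>\<in>lp_module p ZX. T (\<lambda>z n. \<xi> z n + \<eta> z n) = (\<lambda>z n. T \<xi> z n + T \<eta> z n))
   \<and> (\<forall>\<xi>\<in>lp_module p ZX. \<forall>c::complex. T (\<lambda>z n. c * \<xi> z n) = (\<lambda>z n. c * T \<xi> z n))
   \<and> (\<exists>C. \<forall>\<xi>\<in>lp_module p ZX. lp_norm p ZY (T \<xi>) \<le> C * lp_norm p ZX \<xi>)"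

definition isometric_lp_op :: "real \<Rightarrow> 'a set \<Rightarrow> 'b set
    \<Rightarrow> (('a \<Rightarrow> nat \<Rightarrow> complex) \<Rightarrow> ('b \<Rightarrow> nat \<Rightarrow> complex)) \<Rightarrow> bool" where
  "isometric_lp_op p ZX ZY T \<longleftrightarrow> bounded_lp_op p ZX ZY T
     \<and> (\<forall>\<xi>\<in>lp_module p ZX. lp_norm p ZY (T \<xi>) = lp_norm p ZX \<xi>)"

definition contractive_lp_op :: "real \<Rightarrow> 'a set \<Rightarrow> 'b set
    \<Rightarrow> (('a \<Rightarrow> nat \<Rightarrow> complex) \<Rightarrow> ('b \<Rightarrow> nat \<Rightarrow> complex)) \<Rightarrow> bool" where
  "contractive_lp_op p ZX ZY T \<longleftrightarrow> bounded_lp_op p ZX ZY T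
     \<and> (\<forall>\<xi>\<in>lp_module p ZX. lp_norm p ZY (T \<xi>) \<le> lp_norm p ZX \<xi>)"

definition lp_supp :: "real \<Rightarrow> 'a::topological_space set \<Rightarrow> 'b::topological_space set
    \<Rightarrow> (('a \<Rightarrow> nat \<Rightarrow> complex) \<Rightarrow> ('b \<Rightarrow> nat \<Rightarrow> complex)) \<Rightarrow> ('a \<times> 'b) set" where
  "lp_supp p ZX ZY T = {(x,y). \<forall>U V. open U \<longrightarrow> x \<in> U \<longrightarrow> open V \<longrightarrow> y \<in> V \<longrightarrow>
      (\<exists>\<xi>\<in>lp_module p ZX. chi V (T (chi U \<xi>)) \<noteq> (\<lambda>z n. 0))}"

end

theory Submission
  imports Defs
begin

text \<open>Since ZY is dense, every z \<in> ZX has a point w z \<in> ZY with d(f z, w z) < \<epsilon>.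
  The countably many copies of z in ZX \<times> \<nat> are sent injectively into the fibre of
  w z in ZY \<times> \<nat>. Transporting coordinates along such an injection g is an isometry V,
  composing with g is a contractive left inverse of V, and both operators are supported
  in the closure of the graph of w. By continuity of f the closed set
  {(x, y). d(f x, y) \<le> \<epsilon>} contains that graph, hence its closure.\<close>

definition lp_pushforward ::
    "('a \<times> nat \<Rightarrow> 'b \<times> nat) \<Rightarrow> 'a set \<Rightarrow> ('a \<Rightarrow> nat \<Rightarrow> complex) \<Rightarrow> 'b \<Rightarrow> nat \<Rightarrow> complex" where
  "lp_pushforward g Z \<xi> = (\<lambda>y m. if (y, m) \<in> g ` (Z \<times> UNIV)
     then case_prod \<xi> (inv_into (Z \<times> UNIV) g (y, m)) else 0)"

definition lp_pullback ::
    "('a \<times> nat \<Rightarrow> 'b \<times> nat) \<Rightarrow> 'a set \<Rightarrow> ('b \<Rightarrow> nat \<Rightarrow> complex) \<Rightarrow> 'a \<Rightarrow> nat \<Rightarrow> complex" where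
  "lp_pullback g Z \<eta> = (\<lambda>z n. if z \<in> Z then case_prod \<eta> (g (z, n)) else 0)"

lemma lp_module_lp_norm_if_has_sum:
  assumes "((\<lambda>(z, n). norm (\<xi> z n) powr p) has_sum s) (Z \<times> UNIV)"
    and "\<And>z n. z \<notin> Z \<Longrightarrow> \<xi> z n = 0"
  shows "\<xi> \<in> lp_module p Z" and "lp_norm p Z \<xi> = s powr (1 / p)"
  using assms by (auto simp: lp_module_def lp_norm_def summable_on_def infsumI)

lemma lp_pushforward_apply:
  assumes "inj_on g (Z \<times> UNIV)" and "z \<in> Z"
  shows "lp_pushforward g Z \<xi> (fst (g (z, n))) (snd (g (z, n))) = \<xi> z n"
  using assms by (simp add: lp_pushforward_def inv_into_f_f)

lemma lp_pushforward_eq_0: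
  assumes "(y, m) \<notin> g ` (Z \<times> UNIV)"
  shows "lp_pushforward g Z \<xi> y m = 0"
  using assms by (simp add: lp_pushforward_def)

lemma lp_pullback_pushforward:
  assumes "inj_on g (Z \<times> UNIV)" and "\<xi> \<in> lp_module p Z"
  shows "lp_pullback g Z (lp_pushforward g Z \<xi>) = \<xi>"
proof (intro ext)
  fix z n
  show "lp_pullback g Z (lp_pushforward g Z \<xi>) z n = \<xi> z n"
  proof (cases "z \<in> Z")
    case True
    then show ?thesis
      using lp_pushforward_apply[OF assms(1) True] by (simp add: lp_pullback_def case_prod_beta)
  next
    case False
    then show ?thesis using assms(2) by (simp add: lp_pullback_def lp_module_def)
  qed
qed

lemma isometric_lp_pushforward:
  assumes inj: "inj_on g (ZX \<times> UNIV)" and into: "g ` (ZX \<times> UNIV) \<subseteq> ZY \<times> UNIV"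
    and "p > 0"
  shows "isometric_lp_op p ZX ZY (lp_pushforward g ZX)"
proof -
  have iso: "lp_pushforward g ZX \<xi> \<in> lp_module p ZY
      \<and> lp_norm p ZY (lp_pushforward g ZX \<xi>) = lp_norm p ZX \<xi>"
    if \<xi>: "\<xi> \<in> lp_module p ZX" for \<xi>
  proof -
    let ?S = "ZX \<times> (UNIV :: nat set)"
    let ?F = "\<lambda>(z, n). norm (\<xi> z n) powr p"
    let ?H = "\<lambda>(y, m). norm (lp_pushforward g ZX \<xi> y m) powr p"
    have "(?F has_sum infsum ?F ?S) ?S"
      using \<xi> by (simp add: lp_module_def)
    moreover have "(?H \<circ> g) q = ?F q" if "q \<in> ?S" for q
      using lp_pushforward_apply[OF inj, of "fst q" \<xi> "snd q"] that
      by (auto simp: case_prod_beta)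
    ultimately have "((?H \<circ> g) has_sum infsum ?F ?S) ?S"
      using has_sum_cong by blast
    then have "(?H has_sum infsum ?F ?S) (g ` ?S)"
      by (simp only: has_sum_reindex[OF inj])
    then have H_sum: "(?H has_sum infsum ?F ?S) (ZY \<times> UNIV)"
      by (rule has_sum_cong_neutral[THEN iffD1, rotated -1])
        (use into \<open>p > 0\<close> in \<open>auto simp: lp_pushforward_eq_0\<close>)
    have vanish: "lp_pushforward g ZX \<xi> y m = 0" if "y \<notin> ZY" for y m
      using that into by (auto intro: lp_pushforward_eq_0)
    show ?thesis
      using lp_module_lp_norm_if_has_sum[OF H_sum vanish] by (simp add: lp_norm_def)
  qed
  have "bounded_lp_op p ZX ZY (lp_pushforward g ZX)"
    unfolding bounded_lp_op_def
  proof (intro conjI ballI allI)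
    show "\<exists>C. \<forall>\<xi>\<in>lp_module p ZX. lp_norm p ZY (lp_pushforward g ZX \<xi>) \<le> C * lp_norm p ZX \<xi>"
      using iso by (intro exI[of _ 1]) auto
  qed (use iso in \<open>auto intro!: ext simp: lp_pushforward_def split: prod.splits\<close>)
  with iso show ?thesis
    by (simp add: isometric_lp_op_def)
qed

lemma contractive_lp_pullback:
  assumes inj: "inj_on g (ZX \<times> UNIV)" and into: "g ` (ZX \<times> UNIV) \<subseteq> ZY \<times> UNIV"
    and "p > 0"
  shows "contractive_lp_op p ZY ZX (lp_pullback g ZX)"
proof -
  have contr: "lp_pullback g ZX \<eta> \<in> lp_module p ZX
      \<and> lp_norm p ZX (lp_pullback g ZX \<eta>) \<le> lp_norm p ZY \<eta>"
    if \<eta>: "\<eta> \<in> lp_module p ZY" for \<eta>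
  proof -
    let ?S = "ZX \<times> (UNIV :: nat set)"
    let ?H = "\<lambda>(y, m). norm (\<eta> y m) powr p"
    let ?F = "\<lambda>(z, n). norm (lp_pullback g ZX \<eta> z n) powr p"
    have sum_ZY: "?H summable_on (ZY \<times> UNIV)"
      using \<eta> by (simp add: lp_module_def)
    then have sum_image: "?H summable_on (g ` ?S)"
      using into by (rule summable_on_subset_banach)
    then have "((?H \<circ> g) has_sum infsum ?H (g ` ?S)) ?S"
      by (simp flip: has_sum_reindex[OF inj])
    then have F_sum: "(?F has_sum infsum ?H (g ` ?S)) ?S"
      by (rule has_sum_cong[THEN iffD2, rotated]) (auto simp: lp_pullback_def split: prod.splits)
    have vanish: "lp_pullback g ZX \<eta> z n = 0" if "z \<notin> ZX" for z n
      using that by (simp add: lp_pullback_def)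
    have "infsum ?H (g ` ?S) \<le> infsum ?H (ZY \<times> UNIV)"
      by (rule infsum_mono_neutral[OF sum_image sum_ZY]) (use into in auto)
    moreover have "0 \<le> infsum ?H (g ` ?S)"
      by (rule infsum_nonneg) auto
    ultimately have "infsum ?H (g ` ?S) powr (1 / p) \<le> lp_norm p ZY \<eta>"
      unfolding lp_norm_def using \<open>p > 0\<close> by (intro powr_mono2) auto
    then show ?thesis
      using lp_module_lp_norm_if_has_sum[OF F_sum vanish] by simp
  qed
  have "bounded_lp_op p ZY ZX (lp_pullback g ZX)"
    unfolding bounded_lp_op_def
  proof (intro conjI ballI allI)
    show "\<exists>C. \<forall>\<eta>\<in>lp_module p ZY. lp_norm p ZX (lp_pullback g ZX \<eta>) \<le> C * lp_norm p ZY \<eta>"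
      using contr by (intro exI[of _ 1]) auto
  qed (use contr in \<open>auto intro!: ext simp: lp_pullback_def split: prod.splits\<close>)
  with contr show ?thesis
    by (simp add: contractive_lp_op_def)
qed

text \<open>Off a closed set C, a point (x, y) has a box neighbourhood U \<times> V missing C, and the
  operators below only connect the coordinate z to the coordinate fst (g (z, n)).\<close>

lemma lp_supp_pushforward_subset:
  assumes "closed C" and graph: "\<And>z n. z \<in> ZX \<Longrightarrow> (z, fst (g (z, n))) \<in> C"
  shows "lp_supp p ZX ZY (lp_pushforward g ZX) \<subseteq> C"
proof clarify
  fix x y assume q: "(x, y) \<in> lp_supp p ZX ZY (lp_pushforward g ZX)"
  show "(x, y) \<in> C"
  proof (rule ccontr)
    assume "(x, y) \<notin> C"
    then obtain U V where UV: "open U" "open V" "(x, y) \<in> U \<times> V" "U \<times> V \<subseteq> - C"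
      using open_prod_elim[of "- C" "(x, y)"] \<open>closed C\<close> by blast
    have "chi V (lp_pushforward g ZX (chi U \<xi>)) = (\<lambda>y m. 0)" for \<xi>
    proof (intro ext)
      fix y' m
      show "chi V (lp_pushforward g ZX (chi U \<xi>)) y' m = 0"
      proof (cases "(y', m) \<in> g ` (ZX \<times> UNIV) \<and> y' \<in> V")
        case True
        then have im: "(y', m) \<in> g ` (ZX \<times> UNIV)" and "y' \<in> V"
          by auto
        define z where "z = inv_into (ZX \<times> UNIV) g (y', m)"
        have "z \<in> ZX \<times> UNIV"
          unfolding z_def by (rule inv_into_into[OF im])
        moreover have "g z = (y', m)"
          unfolding z_def by (rule f_inv_into_f[OF im])
        ultimately have "(fst z, y') \<in> C"
          using graph[of "fst z" "snd z"] by (metis mem_Sigma_iff fst_conv prod.collapse)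
        then have "fst z \<notin> U"
          using UV(4) \<open>y' \<in> V\<close> by blast
        then show ?thesis
          using im by (simp add: chi_def lp_pushforward_def z_def[symmetric] case_prod_beta)
      qed (auto simp: chi_def lp_pushforward_eq_0)
    qed
    moreover have "\<exists>\<xi>\<in>lp_module p ZX. chi V (lp_pushforward g ZX (chi U \<xi>)) \<noteq> (\<lambda>z n. 0)"
      using q UV(1-3) unfolding lp_supp_def by blast
    ultimately show False
      by blast
  qed
qed

lemma lp_supp_pullback_subset:
  assumes "closed C" and graph: "\<And>z n. z \<in> ZX \<Longrightarrow> (z, fst (g (z, n))) \<in> C"
  shows "lp_supp p ZY ZX (lp_pullback g ZX) \<subseteq> {(y, x). (x, y) \<in> C}"
proof clarify
  fix y x assume q: "(y, x) \<in> lp_supp p ZY ZX (lp_pullback g ZX)"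
  show "(x, y) \<in> C"
  proof (rule ccontr)
    assume "(x, y) \<notin> C"
    then obtain U V where UV: "open U" "open V" "(x, y) \<in> U \<times> V" "U \<times> V \<subseteq> - C"
      using open_prod_elim[of "- C" "(x, y)"] \<open>closed C\<close> by blast
    have "chi U (lp_pullback g ZX (chi V \<eta>)) = (\<lambda>z n. 0)" for \<eta>
      using graph UV(4) by (force simp: chi_def lp_pullback_def case_prod_beta)
    moreover have "\<exists>\<eta>\<in>lp_module p ZY. chi U (lp_pullback g ZX (chi V \<eta>)) \<noteq> (\<lambda>z n. 0)"
      using q UV(1-3) unfolding lp_supp_def by blast
    ultimately show False
      by blast
  qed
qed

lemma exists_inj_on_Times_UNIV_over:
  assumes "countable ZX" and "w ` ZX \<subseteq> ZY"
  shows "\<exists>g. inj_on g (ZX \<times> (UNIV :: nat set)) \<and> g ` (ZX \<times> UNIV) \<subseteq> ZY \<times> (UNIV :: nat set)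
    \<and> (\<forall>z n. fst (g (z, n)) = w z)"
proof (intro exI conjI allI)
  let ?g = "\<lambda>(z, n). (w z, prod_encode (to_nat_on ZX z, n))"
  show "inj_on ?g (ZX \<times> UNIV)"
    using inj_on_to_nat_on[OF assms(1)] by (auto simp: inj_on_def prod_encode_eq)
  show "?g ` (ZX \<times> UNIV) \<subseteq> ZY \<times> UNIV"
    using assms(2) by auto
qed simp

lemma closed_dist_le:
  assumes "continuous_on UNIV f"
  shows "closed {(x, y). dist (f x) y \<le> e}"
proof -
  have "continuous_on UNIV (\<lambda>q. dist (f (fst q)) (snd q))"
    by (intro continuous_intros continuous_on_compose2[OF assms]) auto
  then have "closed {q. dist (f (fst q)) (snd q) \<le> e}"
    by (rule closed_Collect_le[OF _ continuous_on_const])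
  then show ?thesis
    by (simp add: case_prod_unfold)
qed

theorem mainTheorem8:
  fixes f :: "'a::metric_space \<Rightarrow> 'b::metric_space"
    and ZX :: "'a set" and ZY :: "'b set" and p :: real and \<epsilon> :: real
  assumes "proper_space TYPE('a)" and "proper_space TYPE('b)"
    and "1 \<le> p"
    and "continuous_on UNIV f" and "coarse_map f"
    and "countable ZX" and "closure ZX = UNIV"
    and "countable ZY" and "closure ZY = UNIV"
    and "\<epsilon> > 0"
  shows "\<exists>V Vp. isometric_lp_op p ZX ZY V \<and> contractive_lp_op p ZY ZX Vp
     \<and> (\<forall>\<xi>\<in>lp_module p ZX. Vp (V \<xi>) = \<xi>)
     \<and> lp_supp p ZX ZY V \<subseteq> {(x,y). dist (f x) y \<le> \<epsilon>}
     \<and> lp_supp p ZY ZX Vp \<subseteq> {(y,x). dist (f x) y \<le> \<epsilon>}"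
proof -
  have "\<exists>y\<in>ZY. dist (f z) y < \<epsilon>" for z
    using closure_approachableD[of "f z" ZY \<epsilon>] assms(9,10) by blast
  then obtain w where w: "\<And>z. w z \<in> ZY" "\<And>z. dist (f z) (w z) < \<epsilon>"
    by metis
  then obtain g :: "'a \<times> nat \<Rightarrow> 'b \<times> nat"
    where inj: "inj_on g (ZX \<times> UNIV)" and into: "g ` (ZX \<times> UNIV) \<subseteq> ZY \<times> UNIV"
      and over_w: "\<And>z n. fst (g (z, n)) = w z"
    using exists_inj_on_Times_UNIV_over[OF assms(6), of w ZY] by blast
  let ?C = "{(x, y). dist (f x) y \<le> \<epsilon>}"
  have "closed ?C"
    using assms(4) by (rule closed_dist_le)
  moreover have "(z, fst (g (z, n))) \<in> ?C" for z n
    using w(2)[of z] over_w[of z n] by simp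
  moreover have "p > 0"
    using assms(3) by simp
  ultimately show ?thesis
    using isometric_lp_pushforward[OF inj into] contractive_lp_pullback[OF inj into]
      lp_pullback_pushforward[OF inj]
      lp_supp_pushforward_subset[of ?C ZX g p ZY] lp_supp_pullback_subset[of ?C ZX g p ZY]
    by (intro exI[of _ "lp_pushforward g ZX"] exI[of _ "lp_pullback g ZX"]) simp
qed

end
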